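(* Let $V$ be a nonlocal vertex algebra. Assume there exists a lower-truncated, exhaustive increasing filtration $F=\{F_n\}_{n\in\mathbb{Z}}$ of $V$ with $\mathbf{1}\in F_0$ satisfying either (i) $a_kF_n\subset F_{m+n}$ for all $a\in F_m$, $m,n,k\in\mathbb{Z}$, or (ii) $a_mF_n\subset F_{k+n-m-1}$ for all $a\in F_k$, $k,m,n\in\mathbb{Z}$, such that the left adjoint module for $\mathrm{Gr}_F(V)$ is graded-irreducible. Then the left adjoint module for $V$ is irreducible.
   Context: A nonlocal vertex algebra is a complex vector space $V$ with vector $\mathbf{1}$ and linear $Y:V\to\mathrm{Hom}(V,V((x)))$, $Y(v,x)=\sum_nv_nx^{-n-1}$, with $Y(\mathbf{1},x)v=v$, $Y(v,x)\mathbf{1}\in V[[x]]$ with constant term $v$, and weak associativity $(x_0+x_2)^lY(u,x_0+x_2)Y(v,x_2)w=(x_0+x_2)^lY(Y(u,x_0)v,x_2)w$ for some $l\ge0$. The left adjoint module is $V$ acting on itself by $Y$; it is irreducible if its only submodules are $0$ and $V$. A filtration $F_n\subset F_{n+1}$ is lower-truncated if $F_n=0$ for $n$ sufficiently small, and exhaustive if $\bigcup_nF_n=V$. $\mathrm{Gr}_F(V)=\coprod_nF_n/F_{n-1}$ is a nonlocal vertex algebra with vacuum $\mathbf{1}+F_{-1}$ and products $(a+F_{m-1})_k(b+F_{n-1})=a_kb+F_{m+n-1}$ in case (i), resp. $a_kb+F_{m+n-k-2}$ in case (ii), for $a\in F_m$, $b\in F_n$; it is graded by the index $n$ (case (i)),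 resp. by $n$ as a $\mathbb{Z}$-graded algebra (case (ii)). Graded-irreducible means the only graded submodules of the adjoint module are $0$ and the whole space. *)

theory Defs
  imports Main "HOL-Library.Set_Algebras" Complex_Main
begin

text \<open>The vertex operator Y(a,x)b = sum_n a_n b x^(-n-1) is encoded by its modes:
  Y a n b = a_n b.\<close>

text \<open>Coefficient of x0^i x2^j in (x0+x2)^l Y(u,x0+x2)Y(v,x2)w,
  with (x0+x2)^e expanded in nonnegative powers of x2.  The summation set is finite
  by lower truncation.\<close>
definition wa_lhs ::
  "(complex \<Rightarrow> 'v \<Rightarrow> 'v) \<Rightarrow> ('v \<Rightarrow> int \<Rightarrow> 'v \<Rightarrow> 'v::ab_group_add) \<Rightarrow>
   'v \<Rightarrow> 'v \<Rightarrow> 'v \<Rightarrow> nat \<Rightarrow> int \<Rightarrow> int \<Rightarrow> 'v" where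
  "wa_lhs sc Y u v w l i j =
     (\<Sum>k\<in>{k::nat. Y v (int k - j - 1) w \<noteq> 0}.
        sc ((of_int (int l - (int l - 1 - int k - i) - 1) :: complex) gchoose k)
           (Y u (int l - 1 - int k - i) (Y v (int k - j - 1) w)))"

text \<open>Coefficient of x0^i x2^j in (x0+x2)^l Y(Y(u,x0)v,x2)w.\<close>
definition wa_rhs ::
  "(complex \<Rightarrow> 'v \<Rightarrow> 'v) \<Rightarrow> ('v \<Rightarrow> int \<Rightarrow> 'v \<Rightarrow> 'v::ab_group_add) \<Rightarrow>
   'v \<Rightarrow> 'v \<Rightarrow> 'v \<Rightarrow> nat \<Rightarrow> int \<Rightarrow> int \<Rightarrow> 'v" where
  "wa_rhs sc Y u v w l i j =
     (\<Sum>t\<in>{0..l}. sc (of_nat (l choose t))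
        (Y (Y u (int l - int t - 1 - i) v) (int t - j - 1) w))"

definition nonlocal_VA ::
  "(complex \<Rightarrow> 'v \<Rightarrow> 'v) \<Rightarrow> ('v \<Rightarrow> int \<Rightarrow> 'v \<Rightarrow> 'v::ab_group_add) \<Rightarrow> 'v \<Rightarrow> bool" where
  "nonlocal_VA sc Y vac \<longleftrightarrow>
     vector_space sc \<and>
     (\<forall>n b. Vector_Spaces.linear sc sc (\<lambda>a. Y a n b)) \<and>
     (\<forall>a n. Vector_Spaces.linear sc sc (Y a n)) \<and>
     (\<forall>a b. \<exists>N. \<forall>n\<ge>N. Y a n b = 0) \<and>
     (\<forall>n v. Y vac n v = (if n = -1 then v else 0)) \<and>
     (\<forall>v. (\<forall>n\<ge>0. Y v n vac = 0) \<and> Y v (-1) vac = v) \<and>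
     (\<forall>u v w. \<exists>l::nat. \<forall>i j. wa_lhs sc Y u v w l i j = wa_rhs sc Y u v w l i j)"

definition adjoint_irreducible ::
  "(complex \<Rightarrow> 'v \<Rightarrow> 'v) \<Rightarrow> ('v \<Rightarrow> int \<Rightarrow> 'v \<Rightarrow> 'v::ab_group_add) \<Rightarrow> bool" where
  "adjoint_irreducible sc Y \<longleftrightarrow>
     (\<forall>U. module.subspace sc U \<and> (\<forall>a k b. b \<in> U \<longrightarrow> Y a k b \<in> U) \<longrightarrow>
          U = {0} \<or> U = UNIV)"

definition good_filtration ::
  "(complex \<Rightarrow> 'v \<Rightarrow> 'v) \<Rightarrow> 'v \<Rightarrow> (int \<Rightarrow> 'v::ab_group_add set) \<Rightarrow> bool" where
  "good_filtration sc vac F \<longleftrightarrow>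
     (\<forall>n. module.subspace sc (F n)) \<and>
     (\<forall>n. F n \<subseteq> F (n + 1)) \<and>
     (\<exists>N. \<forall>n\<le>N. F n = {0}) \<and>
     (\<Union>n. F n) = UNIV \<and>
     vac \<in> F 0"

text \<open>tgt m n k = the filtration degree of a_k b for a in F_m, b in F_n:
  case (i): m + n; case (ii): m + n - k - 1.\<close>
definition tgt_i :: "int \<Rightarrow> int \<Rightarrow> int \<Rightarrow> int" where
  "tgt_i m n k = m + n"
definition tgt_ii :: "int \<Rightarrow> int \<Rightarrow> int \<Rightarrow> int" where
  "tgt_ii m n k = m + n - k - 1"

definition filt_compatible ::
  "('v \<Rightarrow> int \<Rightarrow> 'v \<Rightarrow> 'v) \<Rightarrow> (int \<Rightarrow> 'v set) \<Rightarrow> (int \<Rightarrow> int \<Rightarrow> int \<Rightarrow> int) \<Rightarrow> bool" where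
  "filt_compatible Y F tgt \<longleftrightarrow>
     (\<forall>m n k a b. a \<in> F m \<longrightarrow> b \<in> F n \<longrightarrow> Y a k b \<in> F (tgt m n k))"

text \<open>The class a + F_(n-1) of a \<in> F_n in the graded piece F_n/F_(n-1) of Gr_F(V).\<close>
definition gcls :: "(int \<Rightarrow> 'v::ab_group_add set) \<Rightarrow> int \<Rightarrow> 'v \<Rightarrow> 'v set" where
  "gcls F n a = (\<lambda>x. a + x) ` F (n - 1)"

definition gpiece :: "(int \<Rightarrow> 'v::ab_group_add set) \<Rightarrow> int \<Rightarrow> 'v set set" where
  "gpiece F n = gcls F n ` F n"

text \<open>A graded submodule of the left adjoint module of Gr_F(V): a family W n of
  subspaces of F_n/F_(n-1) (quotient operations computed on representatives),
  stable under the Gr product (a + F_(m-1))_k (b + F_(n-1)) = a_k b + F_(tgt m n k - 1).\<close>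
definition gr_graded_submodule ::
  "(complex \<Rightarrow> 'v \<Rightarrow> 'v) \<Rightarrow> ('v \<Rightarrow> int \<Rightarrow> 'v \<Rightarrow> 'v::ab_group_add) \<Rightarrow> (int \<Rightarrow> 'v set) \<Rightarrow>
   (int \<Rightarrow> int \<Rightarrow> int \<Rightarrow> int) \<Rightarrow> (int \<Rightarrow> 'v set set) \<Rightarrow> bool" where
  "gr_graded_submodule sc Y F tgt W \<longleftrightarrow>
     (\<forall>n. W n \<subseteq> gpiece F n) \<and>
     (\<forall>n. gcls F n 0 \<in> W n) \<and>
     (\<forall>n a b. a \<in> F n \<longrightarrow> b \<in> F n \<longrightarrow> gcls F n a \<in> W n \<longrightarrow> gcls F n b \<in> W n \<longrightarrow>
        gcls F n (a + b) \<in> W n) \<and>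
     (\<forall>n a c. a \<in> F n \<longrightarrow> gcls F n a \<in> W n \<longrightarrow> gcls F n (sc c a) \<in> W n) \<and>
     (\<forall>m n k a b. a \<in> F m \<longrightarrow> b \<in> F n \<longrightarrow> gcls F n b \<in> W n \<longrightarrow>
        gcls F (tgt m n k) (Y a k b) \<in> W (tgt m n k))"

definition gr_graded_irreducible ::
  "(complex \<Rightarrow> 'v \<Rightarrow> 'v) \<Rightarrow> ('v \<Rightarrow> int \<Rightarrow> 'v \<Rightarrow> 'v::ab_group_add) \<Rightarrow> (int \<Rightarrow> 'v set) \<Rightarrow>
   (int \<Rightarrow> int \<Rightarrow> int \<Rightarrow> int) \<Rightarrow> bool" where
  "gr_graded_irreducible sc Y F tgt \<longleftrightarrow>
     (\<forall>W. gr_graded_submodule sc Y F tgt W \<longrightarrow>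
        (\<forall>n. W n = {gcls F n 0}) \<or> (\<forall>n. W n = gpiece F n))"

end

theory Submission
  imports Defs
begin

text \<open>A subspace U of V stable under all modes induces the graded subspace of Gr_F(V) whose
  degree-n piece consists of the leading symbols of the elements of U \<inter> F_n; compatibility of
  the filtration makes it a graded submodule.  If it is zero, every u \<in> U \<inter> F_n already lies in
  F_(n-1), so U = 0 by lower truncation; if it is everything, F_(n-1) \<subseteq> U implies F_n \<subseteq> U,
  so U = V by exhaustiveness.  Both alternatives of the theorem are covered because the
  degree of a_k b shifts down by one together with the degree of b.\<close>

lemma (in vector_space) translate_eq_iff_diff_mem:
  assumes "subspace H"
  shows "(\<lambda>x. a + x) ` H = (\<lambda>x. b + x) ` H \<longleftrightarrow> a - b \<in> H"
proof
  assume eq: "(\<lambda>x. a + x) ` H = (\<lambda>x. b + x) ` H"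
  have "a \<in> (\<lambda>x. a + x) ` H"
    using subspace_0[OF assms] by (metis add.right_neutral image_eqI)
  then obtain x where "x \<in> H" "a = b + x" using eq by auto
  then show "a - b \<in> H" by simp
next
  have sub: "(\<lambda>x. c + x) ` H \<subseteq> (\<lambda>x. d + x) ` H" if "c - d \<in> H" for c d
  proof
    fix y assume "y \<in> (\<lambda>x. c + x) ` H"
    then obtain x where "x \<in> H" "y = d + ((c - d) + x)" by (auto simp: algebra_simps)
    then show "y \<in> (\<lambda>x. d + x) ` H" using subspace_add[OF assms that] by blast
  qed
  assume "a - b \<in> H"
  moreover have "b - a \<in> H"
    using subspace_neg[OF assms \<open>a - b \<in> H\<close>] by (metis minus_diff_eq)
  ultimately show "(\<lambda>x. a + x) ` H = (\<lambda>x. b + x) ` H" using sub by blast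
qed

lemma (in vector_space) gcls_eq_iff:
  assumes "subspace (F (n - 1))"
  shows "gcls F n a = gcls F n b \<longleftrightarrow> a - b \<in> F (n - 1)"
  unfolding gcls_def using assms by (rule translate_eq_iff_diff_mem)

lemma filtration_induct_covers:
  fixes F :: "int \<Rightarrow> 'a set"
  assumes exhaustive: "(\<Union>n. F n) = UNIV"
    and base: "\<And>n. n \<le> N \<Longrightarrow> F n \<subseteq> S"
    and step_up: "\<And>n. F (n - 1) \<subseteq> S \<Longrightarrow> F n \<subseteq> S"
  shows "S = UNIV"
proof -
  have "F n \<subseteq> S" for n
  proof (cases "n \<le> N")
    case False
    then have "N \<le> n" by simp
    then show ?thesis
    proof (induction n rule: int_ge_induct)
      case (step i)
      then show ?case using step_up[of "i + 1"] by simp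
    qed (simp add: base)
  qed (rule base)
  then show ?thesis using exhaustive by blast
qed

definition assoc_graded :: "(int \<Rightarrow> 'v::ab_group_add set) \<Rightarrow> 'v set \<Rightarrow> int \<Rightarrow> 'v set set" where
  "assoc_graded F U n = gcls F n ` (U \<inter> F n)"

lemma (in vector_space) gcls_mem_assoc_graded_iff:
  assumes "subspace (F (n - 1))"
  shows "gcls F n a \<in> assoc_graded F U n \<longleftrightarrow> (\<exists>u \<in> U \<inter> F n. a - u \<in> F (n - 1))"
  unfolding assoc_graded_def using gcls_eq_iff[where F = F and n = n, OF assms] by blast

lemma gr_graded_submodule_assoc_graded:
  fixes sc :: "complex \<Rightarrow> 'v \<Rightarrow> 'v::ab_group_add"
  assumes vs: "vector_space sc"
    and lin: "\<And>a k. Vector_Spaces.linear sc sc (Y a k)"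
    and F_sub: "\<And>n. module.subspace sc (F n)"
    and compat: "filt_compatible Y F tgt"
    and tgt_shift: "\<And>m n k. tgt m (n - 1) k = tgt m n k - 1"
    and U_sub: "module.subspace sc U" and U_stable: "\<And>a k b. b \<in> U \<Longrightarrow> Y a k b \<in> U"
  shows "gr_graded_submodule sc Y F tgt (assoc_graded F U)"
proof -
  interpret vector_space sc by (rule vs)
  note mem = gcls_mem_assoc_graded_iff[OF F_sub]
  have Y_mem: "Y a k b \<in> F (tgt m n k)" if "a \<in> F m" "b \<in> F n" for a b m n k
    using compat that unfolding filt_compatible_def by blast
  show ?thesis
    unfolding gr_graded_submodule_def
  proof (intro conjI allI impI)
    fix n show "assoc_graded F U n \<subseteq> gpiece F n"
      unfolding assoc_graded_def gpiece_def by auto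
    show "gcls F n 0 \<in> assoc_graded F U n"
      unfolding assoc_graded_def using subspace_0[OF U_sub] subspace_0[OF F_sub] by blast
  next
    fix n a b
    assume "gcls F n a \<in> assoc_graded F U n" "gcls F n b \<in> assoc_graded F U n"
    then obtain u v where u: "u \<in> U \<inter> F n" "a - u \<in> F (n - 1)"
      and v: "v \<in> U \<inter> F n" "b - v \<in> F (n - 1)" by (auto simp: mem)
    have "(a + b) - (u + v) = (a - u) + (b - v)" by (simp add: algebra_simps)
    then have "(a + b) - (u + v) \<in> F (n - 1)" using u v subspace_add[OF F_sub] by metis
    moreover have "u + v \<in> U \<inter> F n"
      using u v subspace_add[OF U_sub] subspace_add[OF F_sub] by auto
    ultimately show "gcls F n (a + b) \<in> assoc_graded F U n" by (auto simp: mem)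
  next
    fix n a c
    assume "gcls F n a \<in> assoc_graded F U n"
    then obtain u where u: "u \<in> U \<inter> F n" "a - u \<in> F (n - 1)" by (auto simp: mem)
    have "sc c a - sc c u \<in> F (n - 1)"
      using subspace_scale[OF F_sub u(2)] by (simp add: scale_right_diff_distrib)
    moreover have "sc c u \<in> U \<inter> F n"
      using u subspace_scale[OF U_sub] subspace_scale[OF F_sub] by auto
    ultimately show "gcls F n (sc c a) \<in> assoc_graded F U n" by (auto simp: mem)
  next
    fix m n k a b
    assume a: "a \<in> F m" and "gcls F n b \<in> assoc_graded F U n"
    then obtain u where u: "u \<in> U \<inter> F n" "b - u \<in> F (n - 1)" by (auto simp: mem)
    have "Y a k b - Y a k u \<in> F (tgt m n k - 1)"
      using Y_mem[OF a u(2), of k] module_hom.diff[OF lin[unfolded linear_iff_module_hom]] tgt_shift by metis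
    moreover have "Y a k u \<in> U \<inter> F (tgt m n k)" using u a U_stable Y_mem by blast
    ultimately show "gcls F (tgt m n k) (Y a k b) \<in> assoc_graded F U (tgt m n k)"
      by (auto simp: mem)
  qed
qed

lemma (in vector_space) eq_zero_if_assoc_graded_trivial:
  assumes F_sub: "\<And>n. subspace (F n)"
    and exhaustive: "(\<Union>n. F n) = UNIV" and truncated: "\<And>n. n \<le> N \<Longrightarrow> F n = {0}"
    and U_sub: "subspace U" and trivial: "\<And>n. assoc_graded F U n = {gcls F n 0}"
  shows "U = {0}"
proof -
  have "{u. u \<in> U \<longrightarrow> u = 0} = UNIV"
  proof (rule filtration_induct_covers[where N = N, OF exhaustive])
    fix n assume below: "F (n - 1) \<subseteq> {u. u \<in> U \<longrightarrow> u = 0}"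
    show "F n \<subseteq> {u. u \<in> U \<longrightarrow> u = 0}"
    proof clarify
      fix u assume "u \<in> F n" "u \<in> U"
      then have "gcls F n u = gcls F n 0"
        using trivial[of n] unfolding assoc_graded_def by blast
      then show "u = 0" using below \<open>u \<in> U\<close> gcls_eq_iff[OF F_sub] by auto
    qed
  qed (use truncated in auto)
  then show ?thesis using subspace_0[OF U_sub] by blast
qed

lemma (in vector_space) eq_UNIV_if_assoc_graded_full:
  assumes F_sub: "\<And>n. subspace (F n)"
    and exhaustive: "(\<Union>n. F n) = UNIV" and truncated: "\<And>n. n \<le> N \<Longrightarrow> F n = {0}"
    and U_sub: "subspace U" and full: "\<And>n. assoc_graded F U n = gpiece F n"
  shows "U = UNIV"
proof (rule filtration_induct_covers[where N = N, OF exhaustive])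
  fix n assume below: "F (n - 1) \<subseteq> U"
  show "F n \<subseteq> U"
  proof
    fix a assume "a \<in> F n"
    then have "gcls F n a \<in> assoc_graded F U n" using full unfolding gpiece_def by auto
    then obtain u where "u \<in> U" "a - u \<in> F (n - 1)"
      by (auto simp: gcls_mem_assoc_graded_iff[OF F_sub])
    then have "(a - u) + u \<in> U" using below subspace_add[OF U_sub] by blast
    then show "a \<in> U" by simp
  qed
qed (use truncated subspace_0[OF U_sub] in auto)

lemma adjoint_irreducible_if_gr_graded_irreducible:
  assumes VA: "nonlocal_VA sc Y vac"
    and GF: "good_filtration sc vac F"
    and compat: "filt_compatible Y F tgt"
    and irred: "gr_graded_irreducible sc Y F tgt"
    and tgt_shift: "\<And>m n k. tgt m (n - 1) k = tgt m n k - 1"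
  shows "adjoint_irreducible sc Y"
proof -
  have vs: "vector_space sc" using VA unfolding nonlocal_VA_def by blast
  interpret vector_space sc by (rule vs)
  have lin: "\<And>a k. Vector_Spaces.linear sc sc (Y a k)" using VA unfolding nonlocal_VA_def by blast
  have F_sub: "\<And>n. subspace (F n)" and exhaustive: "(\<Union>n. F n) = UNIV"
    using GF unfolding good_filtration_def by blast+
  obtain N where truncated: "\<And>n. n \<le> N \<Longrightarrow> F n = {0}"
    using GF unfolding good_filtration_def by blast
  show ?thesis
    unfolding adjoint_irreducible_def
  proof (intro allI impI, elim conjE)
    fix U assume U_sub: "subspace U" and "\<forall>a k b. b \<in> U \<longrightarrow> Y a k b \<in> U"
    then have "gr_graded_submodule sc Y F tgt (assoc_graded F U)"
      using gr_graded_submodule_assoc_graded[OF vs lin F_sub compat tgt_shift] by blast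
    then have "(\<forall>n. assoc_graded F U n = {gcls F n 0}) \<or> (\<forall>n. assoc_graded F U n = gpiece F n)"
      using irred unfolding gr_graded_irreducible_def by blast
    then show "U = {0} \<or> U = UNIV"
      using eq_zero_if_assoc_graded_trivial[OF F_sub exhaustive truncated U_sub]
        eq_UNIV_if_assoc_graded_full[OF F_sub exhaustive truncated U_sub] by blast
  qed
qed

theorem proposition2p11:
  fixes sc :: "complex \<Rightarrow> 'v \<Rightarrow> 'v::ab_group_add"
    and Y :: "'v \<Rightarrow> int \<Rightarrow> 'v \<Rightarrow> 'v"
    and vac :: 'v
    and F :: "int \<Rightarrow> 'v set"
  assumes "nonlocal_VA sc Y vac"
    and "good_filtration sc vac F"
    and "(filt_compatible Y F tgt_i \<and> gr_graded_irreducible sc Y F tgt_i) \<or>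
         (filt_compatible Y F tgt_ii \<and> gr_graded_irreducible sc Y F tgt_ii)"
  shows "adjoint_irreducible sc Y"
  using assms(3)
proof
  assume "filt_compatible Y F tgt_i \<and> gr_graded_irreducible sc Y F tgt_i"
  then show ?thesis
    using adjoint_irreducible_if_gr_graded_irreducible[OF assms(1,2)] by (auto simp: tgt_i_def)
next
  assume "filt_compatible Y F tgt_ii \<and> gr_graded_irreducible sc Y F tgt_ii"
  then show ?thesis
    using adjoint_irreducible_if_gr_graded_irreducible[OF assms(1,2)] by (auto simp: tgt_ii_def)
qed

end
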